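(* Let $f:\mathbf{R}^n\to[-\infty,\infty]$ be an arbitrary function and define $\underline{f}(x)=\operatorname{ap\,liminf}_{y\to x}f(y)$ for $x\in\mathbf{R}^n$. Then $\underline{f}$ is a Borel function.
   Context: For $x\in\mathbf{R}^n$, $\operatorname{ap\,liminf}_{y\to x}f(y)=\sup\bigl(\mathbf{R}\cap\{t:\Theta^n(\mathscr{L}^n\llcorner\{y:f(y)<t\},x)=0\}\bigr)$, where $\mathscr{L}^n\llcorner B$ denotes Lebesgue outer measure restricted to $B$ and $\Theta^n(\mu,x)=\lim_{r\downarrow0}\mu(\mathbf{B}(x,r))/(\alpha(n)r^n)$ (Euclidean closed balls, $\alpha(n)$ the volume of the unit ball), the density being said to exist only when this limit exists. *)

theory Defs
  imports "HOL-Analysis.Analysis"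
begin

definition density_zero :: "'a::euclidean_space set \<Rightarrow> 'a \<Rightarrow> bool" where
  "density_zero B x \<longleftrightarrow>
     ((\<lambda>r. outer_measure_of lebesgue (B \<inter> cball x r)
            / ennreal (measure lborel (cball (0::'a) 1) * r ^ DIM('a)))
        \<longlongrightarrow> 0) (at_right 0)"

text \<open>Approximate lower limit; the supremum of the empty set is -\<infinity>.\<close>
definition ap_liminf :: "('a::euclidean_space \<Rightarrow> ereal) \<Rightarrow> 'a \<Rightarrow> ereal" where
  "ap_liminf f x = Sup (ereal ` {t::real. density_zero {y. f y < ereal t} x})"

end

theory Submission
  imports Defs
begin

text \<open>The map \<open>r \<mapsto> L\<^sup>*(B \<inter> cball x r)\<close> is monotone, so a vanishing density at \<open>x\<close> only has
  to be tested along rational radii and rational thresholds, at the price of a factor \<open>2\<^sup>n\<close>.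
  Replacing the value at a radius \<open>r\<close> by the values at radii \<open>s > r\<close> turns each test into an
  open condition in \<open>x\<close>, so \<open>{x. density_zero B x}\<close> is Borel for every set \<open>B\<close>, measurable or
  not. Since \<open>{f < t}\<close> grows with \<open>t\<close>, the approximate lower limit is a countable supremum
  over rational \<open>t\<close> of Borel functions.\<close>

lemma ennreal_divide_less_iff_less_mult:
  fixes a :: ennreal
  assumes "b > 0" "t \<ge> 0"
  shows "a / ennreal b < ennreal t \<longleftrightarrow> a < ennreal (t * b)"
  using assms by (simp add: divide_less_ennreal ennreal_mult)

lemma tendsto_divide_power_at_right_0_iff_Rats:
  fixes g :: "real \<Rightarrow> ennreal"
  assumes "mono g" "c > 0"
  shows "((\<lambda>r. g r / ennreal (c * r ^ n)) \<longlongrightarrow> 0) (at_right 0) \<longleftrightarrow>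
    (\<forall>e\<in>\<rat> \<inter> {0<..}. \<exists>d\<in>\<rat> \<inter> {0<..}. \<forall>r\<in>\<rat> \<inter> {0<..<d}. \<exists>s>r. g s < ennreal (e * c * r ^ n))"
    (is "?lim \<longleftrightarrow> ?rat")
proof
  assume ?lim
  show ?rat
  proof
    fix e :: real assume e: "e \<in> \<rat> \<inter> {0<..}"
    then have "\<forall>\<^sub>F r in at_right 0. g r / ennreal (c * r ^ n) < ennreal (e / 2 ^ n)"
      using \<open>?lim\<close> by (intro order_tendstoD(2)) auto
    then obtain b where "b > 0"
      and b: "\<And>r. 0 < r \<Longrightarrow> r < b \<Longrightarrow> g r / ennreal (c * r ^ n) < ennreal (e / 2 ^ n)"
      unfolding eventually_at_right_field by auto
    obtain d where d: "d \<in> \<rat>" "0 < d" "d < b / 2"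
      using Rats_dense_in_real[of 0 "b / 2"] \<open>b > 0\<close> by auto
    have "\<exists>s>r. g s < ennreal (e * c * r ^ n)" if r: "r \<in> \<rat> \<inter> {0<..<d}" for r
    proof (intro exI conjI)
      show "2 * r > r" using r by simp
      have "0 < 2 * r" "2 * r < b" using r d by auto
      then have "g (2 * r) / ennreal (c * (2 * r) ^ n) < ennreal (e / 2 ^ n)" by (rule b)
      then have "g (2 * r) < ennreal (e / 2 ^ n * (c * (2 * r) ^ n))"
        using ennreal_divide_less_iff_less_mult[of "c * (2 * r) ^ n" "e / 2 ^ n"] r e \<open>c > 0\<close>
        by simp
      also have "e / 2 ^ n * (c * (2 * r) ^ n) = e * c * r ^ n"
        by (simp add: power_mult_distrib)
      finally show "g (2 * r) < ennreal (e * c * r ^ n)" .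
    qed
    then show "\<exists>d\<in>\<rat> \<inter> {0<..}. \<forall>r\<in>\<rat> \<inter> {0<..<d}. \<exists>s>r. g s < ennreal (e * c * r ^ n)"
      using d by blast
  qed
next
  assume ?rat
  show ?lim
  proof (rule order_tendstoI)
    fix a :: ennreal assume "0 < a"
    then obtain b' where "0 < b'" "b' < a" using dense by blast
    then obtain b where b: "0 < b" "ennreal b < a" by (cases b') auto
    obtain e where e: "e \<in> \<rat>" "0 < e" "e < b / 2 ^ n"
      using Rats_dense_in_real[of 0 "b / 2 ^ n"] b by auto
    then have "e \<in> \<rat> \<inter> {0<..}" by simp
    then obtain d where "0 < d"
      and d: "\<forall>r\<in>\<rat> \<inter> {0<..<d}. \<exists>s>r. g s < ennreal (e * c * r ^ n)"
      using \<open>?rat\<close> by blast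
    have "g r / ennreal (c * r ^ n) < a" if r: "0 < r" "r < d" for r
    proof -
      obtain q where q: "q \<in> \<rat>" "r < q" "q < min (2 * r) d"
        using Rats_dense_in_real[of r "min (2 * r) d"] r by auto
      then have "q \<in> \<rat> \<inter> {0<..<d}" using r by auto
      then obtain s where "s > q" and s: "g s < ennreal (e * c * q ^ n)"
        using d by blast
      have "g r \<le> g s" using \<open>s > q\<close> q by (intro monoD[OF \<open>mono g\<close>]) linarith
      also note s
      also have "ennreal (e * c * q ^ n) \<le> ennreal (e * c * (2 * r) ^ n)"
        using q r e \<open>c > 0\<close> by (intro ennreal_leI mult_left_mono power_mono) auto
      also have "e * c * (2 * r) ^ n = (e * 2 ^ n) * (c * r ^ n)"
        by (simp add: power_mult_distrib)
      also have "ennreal \<dots> < ennreal (b * (c * r ^ n))"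
        using e r b \<open>c > 0\<close> by (intro ennreal_lessI mult_strict_right_mono) (auto simp: field_simps)
      finally have "g r < ennreal (b * (c * r ^ n))" .
      then have "g r / ennreal (c * r ^ n) < ennreal b"
        using ennreal_divide_less_iff_less_mult[of "c * r ^ n" b] r b \<open>c > 0\<close> by simp
      then show ?thesis using b by simp
    qed
    then show "\<forall>\<^sub>F r in at_right 0. g r / ennreal (c * r ^ n) < a"
      unfolding eventually_at_right_field using \<open>0 < d\<close> by blast
  qed simp
qed

lemma open_outer_measure_cball_less:
  fixes M :: "'a::metric_space measure"
  shows "open {x. \<exists>s>r. outer_measure_of M (B \<inter> cball x s) < a}"
proof (rule openI)
  fix x assume "x \<in> {x. \<exists>s>r. outer_measure_of M (B \<inter> cball x s) < a}"
  then obtain s where "s > r" and s: "outer_measure_of M (B \<inter> cball x s) < a" by auto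
  have "y \<in> {x. \<exists>s>r. outer_measure_of M (B \<inter> cball x s) < a}" if "y \<in> ball x (s - r)" for y
  proof (intro CollectI exI conjI)
    show "s - dist x y > r" using that by simp
    have "cball y (s - dist x y) \<subseteq> cball x s"
      using dist_triangle[of x _ y] by (smt (verit) mem_cball subsetI)
    then have "outer_measure_of M (B \<inter> cball y (s - dist x y))
        \<le> outer_measure_of M (B \<inter> cball x s)"
      by (intro outer_measure_of_mono) auto
    then show "outer_measure_of M (B \<inter> cball y (s - dist x y)) < a" using s by simp
  qed
  then show "\<exists>e>0. ball x e \<subseteq> {x. \<exists>s>r. outer_measure_of M (B \<inter> cball x s) < a}"
    using \<open>s > r\<close> by (intro exI[of _ "s - r"]) auto
qed

lemma density_zero_iff_Rats:
  fixes B :: "'a::euclidean_space set"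
  shows "density_zero B x \<longleftrightarrow>
    (\<forall>e\<in>\<rat> \<inter> {0<..}. \<exists>d\<in>\<rat> \<inter> {0<..}. \<forall>r\<in>\<rat> \<inter> {0<..<d}. \<exists>s>r.
       outer_measure_of lebesgue (B \<inter> cball x s) < ennreal (e * measure lborel (cball (0::'a) 1) * r ^ DIM('a)))"
  unfolding density_zero_def
proof (rule tendsto_divide_power_at_right_0_iff_Rats)
  show "mono (\<lambda>r. outer_measure_of lebesgue (B \<inter> cball x r))"
    by (intro monoI outer_measure_of_mono) auto
  show "measure lborel (cball (0::'a) 1) > 0"
    by (rule content_cball_pos) simp
qed

lemma sets_borel_density_zero:
  fixes B :: "'a::euclidean_space set"
  shows "{x. density_zero B x} \<in> sets borel"
proof -
  define S where "S e r = {x. \<exists>s>r. outer_measure_of lebesgue (B \<inter> cball x s)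
    < ennreal (e * measure lborel (cball (0::'a) 1) * r ^ DIM('a))}" for e r
  have "{x. density_zero B x} =
      (\<Inter>e\<in>\<rat> \<inter> {0<..}. \<Union>d\<in>\<rat> \<inter> {0<..}. \<Inter>r\<in>\<rat> \<inter> {0<..<d}. S e r)"
    unfolding S_def by (auto simp: density_zero_iff_Rats)
  also have "\<dots> \<in> sets borel"
    unfolding S_def using countable_rat
    by (intro sets.countable_INT'' sets.countable_UN'' borel_open open_outer_measure_cball_less) auto
  finally show ?thesis .
qed

lemma density_zero_subset:
  fixes A B :: "'a::euclidean_space set"
  assumes "A \<subseteq> B" "density_zero B x"
  shows "density_zero A x"
  using assms(2) unfolding density_zero_def
proof (rule tendsto_sandwich[rotated 2, OF tendsto_const])
  show "\<forall>\<^sub>F r in at_right 0.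
      outer_measure_of lebesgue (A \<inter> cball x r) / ennreal (measure lborel (cball (0::'a) 1) * r ^ DIM('a))
      \<le> outer_measure_of lebesgue (B \<inter> cball x r) / ennreal (measure lborel (cball (0::'a) 1) * r ^ DIM('a))"
    using assms(1)
    by (intro always_eventually allI divide_right_mono_ennreal outer_measure_of_mono) blast
qed simp

lemma Sup_ereal_downclosed_eq_SUP_Rats:
  fixes P :: "real \<Rightarrow> bool"
  assumes down: "\<And>s t. s \<le> t \<Longrightarrow> P t \<Longrightarrow> P s"
  shows "Sup (ereal ` {t. P t}) = (SUP q\<in>\<rat>. if P q then ereal q else -\<infinity>)"
proof (rule antisym)
  show "Sup (ereal ` {t. P t}) \<le> (SUP q\<in>\<rat>. if P q then ereal q else -\<infinity>)"
  proof (rule Sup_least, safe)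
    fix t assume "P t"
    show "ereal t \<le> (SUP q\<in>\<rat>. if P q then ereal q else -\<infinity>)"
    proof (rule dense_le)
      fix z assume "z < ereal t"
      show "z \<le> (SUP q\<in>\<rat>. if P q then ereal q else -\<infinity>)"
      proof (cases z)
        case (real u)
        then obtain q where q: "q \<in> \<rat>" "u < q" "q < t"
          using \<open>z < ereal t\<close> Rats_dense_in_real[of u t] by auto
        then have "ereal q \<le> (SUP q\<in>\<rat>. if P q then ereal q else -\<infinity>)"
          using down[of q t] \<open>P t\<close> by (intro SUP_upper2[of q]) auto
        then show ?thesis using real q by (metis ereal_less_eq(3) less_imp_le order_trans)
      qed (use \<open>z < ereal t\<close> in auto)
    qed
  qed
  show "(SUP q\<in>\<rat>. if P q then ereal q else -\<infinity>) \<le> Sup (ereal ` {t. P t})"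
    by (rule SUP_least) (auto intro: Sup_upper)
qed

theorem lemma4p7:
  fixes f :: "'a::euclidean_space \<Rightarrow> ereal"
  shows "(\<lambda>x. ap_liminf f x) \<in> borel_measurable borel"
proof -
  have "ap_liminf f x = (SUP q\<in>\<rat>. if density_zero {y. f y < ereal q} x then ereal q else -\<infinity>)" for x
    unfolding ap_liminf_def
    by (rule Sup_ereal_downclosed_eq_SUP_Rats, erule density_zero_subset[rotated])
      (auto intro: order.strict_trans2)
  moreover have "(\<lambda>x. SUP q\<in>\<rat>. if density_zero {y. f y < ereal q} x then ereal q else -\<infinity>)
      \<in> borel_measurable borel"
    using countable_rat sets_borel_density_zero
    by (intro borel_measurable_SUP measurable_If) auto
  ultimately show ?thesis by simp
qed

end
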